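(* Consider Algorithm SAVIC (described in the context) run with heterogeneous data and $M\ge2$. Suppose: (i) each $f_m$ is $\mu$-strongly convex ($\mu\ge0$) and $L$-smooth; (ii) each $f_m(\cdot,z)$ is almost surely $L$-smooth and $\mu$-strongly convex; (iii) there are constants $0<\alpha\le\Gamma$ with $\alpha I\preceq D^0\preceq\Gamma I$ and $\alpha I\preceq H^t\preceq\Gamma I$ for all $t$. Then for any $t$ with $t_p\le t<t_{p+1}$, $$\mathbb E\left\|\frac1M\sum_{m=1}^M\nabla f_m(x_t^m,z_m)\right\|^2_{(\hat D^{t_p})^{-1}}\le\frac{2L^2}{\alpha^2}V_t+\frac{8L}{\alpha}D_f(\hat x_t,x_* )+\frac{4\sigma_{\mathrm{dif}}^2}{M\alpha}.$$
   Context: Problem: minimize $f(x)=\frac1M\sum_mf_m(x)$ over $\mathbb R^d$, $f_m(x)=\mathbb E_{z\sim\mathcal D_m}[f_m(x,z)]$, $x_*$ the solution; $\mu$-strong convexity and $L$-smoothness: $\frac{\mu}{2}\|x-y\|^2\le g(x)-g(y)-\langle\nabla g(y),x-y\rangle\le\frac{L}{2}\|x-y\|^2$. $\sigma_{\mathrm{dif}}^2=\frac1M\sum_m\mathbb E_{z_m\sim\mathcal D_m}\|\nabla f_m(x_*,z_m)\|^2$. $D_f(x,y)=f(x)-f(y)-\langle\nabla f(y),x-y\rangle$. $\|x\|_A^2=\langle x,Ax\rangle$. Preconditioner: diagonal $D^t$ from diagonal $D^0,H^t$ via $(D^t)^2=\beta_t(D^{t-1})^2+(1-\beta_t)(H^t)^2$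 or $D^t=\beta_tD^{t-1}+(1-\beta_t)H^t$, $\beta_t\in[0,1]$; $(\hat D^t)_{ii}=\max\{\alpha,|D^t_{ii}|\}$. Algorithm SAVIC: stepsize $\gamma>0$, $x_0^m=x_0$, synchronization times $t_0=0<t_1<\dots$; at $t=t_p$ the matrix $\hat D^{t_p}$ is updated and used by all clients for $t_p\le t<t_{p+1}$; client $m$ samples $z_m\sim\mathcal D_m$ i.i.d. and sets $x_{t+1}^m=\frac1M\sum_j(x_t^j-\gamma(\hat D^{t_p})^{-1}\nabla f_j(x_t^j,z_j))$ if $t=t_p$ for some $p$, else $x_{t+1}^m=x_t^m-\gamma(\hat D^{t_p})^{-1}\nabla f_m(x_t^m,z_m)$. Notation: $\hat x_t=\frac1M\sum_mx_t^m$; $V_t=\frac1M\sum_m\|x_t^m-\hat x_t\|^2_{\hat D^{t_p}}$ for $t_p\le t<t_{p+1}$. *)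

theory Defs
  imports "HOL-Analysis.Analysis" "HOL-Probability.Probability"
begin

text \<open>Diagonal matrices on real^'d are represented by their diagonal (a vector).\<close>

definition wnorm2 :: "real^'d \<Rightarrow> real^'d \<Rightarrow> real" where
  "wnorm2 A v = (\<Sum>i\<in>UNIV. A$i * (v$i)^2)"

definition diag_inv :: "real^'d \<Rightarrow> real^'d" where
  "diag_inv A = (\<chi> i. 1 / A$i)"

definition diag_mult :: "real^'d \<Rightarrow> real^'d \<Rightarrow> real^'d" where
  "diag_mult A v = (\<chi> i. A$i * v$i)"

definition hatD :: "real \<Rightarrow> real^'d \<Rightarrow> real^'d" where
  "hatD \<alpha> A = (\<chi> i. max \<alpha> \<bar>A$i\<bar>)"

text \<open>Preconditioner recursion; sq selects the squared (RMSProp/Adam-type) rule,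
  otherwise the linear rule. For the squared rule the nonnegative root is taken.\<close>
primrec precond :: "bool \<Rightarrow> (nat \<Rightarrow> real) \<Rightarrow> real^'d \<Rightarrow> (nat \<Rightarrow> real^'d) \<Rightarrow> nat \<Rightarrow> real^'d" where
  "precond sq \<beta> D0 H 0 = D0"
| "precond sq \<beta> D0 H (Suc t) =
     (if sq then (\<chi> i. sqrt (\<beta> (Suc t) * ((precond sq \<beta> D0 H t)$i)^2 + (1 - \<beta> (Suc t)) * (H (Suc t) $ i)^2))
      else (\<chi> i. \<beta> (Suc t) * (precond sq \<beta> D0 H t)$i + (1 - \<beta> (Suc t)) * H (Suc t) $ i))"

text \<open>Last synchronization time t_p with t_p \<le> t (S = set of synchronization times, 0 \<in> S).\<close>
definition last_sync :: "nat set \<Rightarrow> nat \<Rightarrow> nat" where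
  "last_sync S t = Max {s\<in>S. s \<le> t}"

definition sc_smooth :: "real \<Rightarrow> real \<Rightarrow> (real^'d \<Rightarrow> real) \<Rightarrow> (real^'d \<Rightarrow> real^'d) \<Rightarrow> bool" where
  "sc_smooth \<mu> L g grad \<longleftrightarrow>
     (\<forall>x. (g has_derivative (\<lambda>h. grad x \<bullet> h)) (at x)) \<and>
     (\<forall>x y. \<mu>/2 * (norm (x - y))^2 \<le> g x - g y - grad y \<bullet> (x - y) \<and>
            g x - g y - grad y \<bullet> (x - y) \<le> L/2 * (norm (x - y))^2)"

text \<open>The matrix hat D^{t_p} used at step t along a sample path (H may depend on the path).\<close>
definition savic_Dhat :: "real \<Rightarrow> bool \<Rightarrow> (nat \<Rightarrow> real) \<Rightarrow> real^'d \<Rightarrow> (nat \<Rightarrow> real^'d) \<Rightarrow> nat set \<Rightarrow> nat \<Rightarrow> real^'d" where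
  "savic_Dhat \<alpha> sq \<beta> D0 H S t = hatD \<alpha> (precond sq \<beta> D0 H (last_sync S t))"

text \<open>SAVIC iterates x_t^m along a sample path \<omega> (\<omega> t m = sample of client m at step t);
  Dh t is the preconditioner in use at step t; G m x z is the stochastic gradient.\<close>
primrec savic_iter :: "nat \<Rightarrow> real \<Rightarrow> nat set \<Rightarrow> (nat \<Rightarrow> real^'d) \<Rightarrow> (nat \<Rightarrow> real^'d \<Rightarrow> 'z \<Rightarrow> real^'d)
     \<Rightarrow> real^'d \<Rightarrow> (nat \<Rightarrow> nat \<Rightarrow> 'z) \<Rightarrow> nat \<Rightarrow> nat \<Rightarrow> real^'d" where
  "savic_iter M \<gamma> S Dh G x0 \<omega> 0 = (\<lambda>m. x0)"
| "savic_iter M \<gamma> S Dh G x0 \<omega> (Suc t) =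
     (\<lambda>m. if t \<in> S then
            (1 / real M) *\<^sub>R (\<Sum>j<M. savic_iter M \<gamma> S Dh G x0 \<omega> t j
                 - \<gamma> *\<^sub>R diag_mult (diag_inv (Dh t)) (G j (savic_iter M \<gamma> S Dh G x0 \<omega> t j) (\<omega> t j)))
          else savic_iter M \<gamma> S Dh G x0 \<omega> t m
                 - \<gamma> *\<^sub>R diag_mult (diag_inv (Dh t)) (G m (savic_iter M \<gamma> S Dh G x0 \<omega> t m) (\<omega> t m)))"

definition fobj :: "nat \<Rightarrow> (nat \<Rightarrow> 'z measure) \<Rightarrow> (nat \<Rightarrow> real^'d \<Rightarrow> 'z \<Rightarrow> real) \<Rightarrow> real^'d \<Rightarrow> real" where
  "fobj M D f x = (1 / real M) * (\<Sum>m<M. \<integral>z. f m x z \<partial>D m)"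

end

theory Submission
  imports Defs
begin

text \<open>Split each stochastic gradient at the local iterate x_m as
  [grad f_m(x_m,z) - grad f_m(xhat,z)] + [grad f_m(xhat,z) - grad f_m(x_*,z)] + grad f_m(x_*,z)
  and use |a + b + c|^2 <= 2|a|^2 + 4|b|^2 + 4|c|^2. The first part is controlled by the
  L-Lipschitz continuity of the sample gradients, the second by co-coercivity
  |grad g(x) - grad g(y)|^2 <= 2 L D_g(x,y) together with unbiasedness of the sample gradients.
  For the third, the samples of different clients are independent, so the cross terms have
  expectation <grad f_m(x_*), grad f_k(x_*)>; these means sum to zero at the minimiser, which
  leaves only the sigma_dif^2 term. The clipping alpha <= hatD converts between the weighted
  norms and the Euclidean one.\<close>

definition bregman :: "('a::real_inner \<Rightarrow> real) \<Rightarrow> ('a \<Rightarrow> 'a) \<Rightarrow> 'a \<Rightarrow> 'a \<Rightarrow> real" where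
  "bregman g gr x y = g x - g y - gr y \<bullet> (x - y)"

lemma sc_smooth_bregman_bounds:
  assumes "sc_smooth \<mu> L g gr"
  shows "\<mu> / 2 * (norm (x - y))\<^sup>2 \<le> bregman g gr x y"
    and "bregman g gr x y \<le> L / 2 * (norm (x - y))\<^sup>2"
  using assms unfolding sc_smooth_def bregman_def by blast+

lemma sc_smooth_le:
  assumes "sc_smooth \<mu> L (g :: real^'d \<Rightarrow> real) gr"
  shows "\<mu> \<le> L"
proof -
  let ?v = "1 :: real^'d"
  have "\<mu> / 2 * (norm (?v - 0))\<^sup>2 \<le> L / 2 * (norm (?v - 0))\<^sup>2"
    using sc_smooth_bregman_bounds[OF assms] order_trans by blast
  then show ?thesis
    by simp
qed

lemma inner_le_quadratic_imp_eq_0: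
  fixes e :: "'a::real_inner"
  assumes le: "\<And>h. e \<bullet> h \<le> c * (norm h)\<^sup>2"
  shows "e = 0"
proof -
  define s where "s = 1 / (\<bar>c\<bar> + 1)"
  have s: "0 < s" "s * \<bar>c\<bar> < 1"
    by (auto simp: s_def field_simps)
  have "s * (norm e)\<^sup>2 \<le> c * s\<^sup>2 * (norm e)\<^sup>2"
    using le[of "s *\<^sub>R e"] by (simp add: power2_norm_eq_inner power_mult_distrib)
  also have "\<dots> \<le> \<bar>c\<bar> * s\<^sup>2 * (norm e)\<^sup>2"
    by (intro mult_right_mono) auto
  also have "\<dots> = (s * \<bar>c\<bar>) * s * (norm e)\<^sup>2"
    by (simp add: power2_eq_square)
  finally have "(1 - s * \<bar>c\<bar>) * s * (norm e)\<^sup>2 \<le> 0"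
    by (simp add: algebra_simps)
  then have "(norm e)\<^sup>2 \<le> 0"
    using s by (simp add: mult_le_0_iff zero_le_mult_iff)
  then show ?thesis
    by simp
qed

lemma grad_eq_0_if_min_upper_quadratic:
  fixes gr :: "'a::real_inner"
  assumes upper: "\<And>h. g (x + h) - g x - gr \<bullet> h \<le> c * (norm h)\<^sup>2"
    and min: "\<And>y. g x \<le> g y"
  shows "gr = 0"
proof -
  have "(- gr) \<bullet> h \<le> c * (norm h)\<^sup>2" for h
    using upper[of h] min[of "x + h"] by simp
  then show ?thesis
    using inner_le_quadratic_imp_eq_0 by fastforce
qed

lemma quadratic_lower_bound_le:
  fixes n L B :: real
  assumes "0 \<le> L" "0 \<le> n" and bound: "\<And>s. s * n - L / 2 * s\<^sup>2 * n \<le> B"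
  shows "n \<le> 2 * L * B"
proof (cases "L = 0")
  case True
  have "n = 0"
  proof (rule ccontr)
    assume "n \<noteq> 0"
    then show False
      using bound[of "(\<bar>B\<bar> + 1) / n"] True by simp
  qed
  with True show ?thesis
    by simp
next
  case False
  with assms have "0 < L"
    by simp
  have "n = 2 * L * (1 / L * n - L / 2 * (1 / L)\<^sup>2 * n)"
    using \<open>0 < L\<close> by (simp add: field_simps power2_eq_square)
  also have "\<dots> \<le> 2 * L * B"
    using bound[of "1 / L"] \<open>0 < L\<close> by simp
  finally show ?thesis .
qed

text \<open>Compare g at x, y and the gradient step u = x - s (gr x - gr y): convexity at y and
  smoothness at x give a lower bound quadratic in s, which is then optimised.\<close>
lemma sc_smooth_cocoercive:
  assumes sc: "sc_smooth \<mu> L g gr" and "0 \<le> \<mu>"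
  shows "(norm (gr x - gr y))\<^sup>2 \<le> 2 * L * bregman g gr x y"
proof (rule quadratic_lower_bound_le)
  show "0 \<le> L"
    using sc_smooth_le[OF sc] \<open>0 \<le> \<mu>\<close> by simp
  fix s
  define v where "v = gr x - gr y"
  define u where "u = x - s *\<^sub>R v"
  have split: "bregman g gr x y = bregman g gr u y - bregman g gr u x + s * (norm v)\<^sup>2"
    by (simp add: bregman_def u_def v_def inner_diff_left inner_diff_right
        power2_norm_eq_inner algebra_simps)
  have "0 \<le> bregman g gr u y"
    using sc_smooth_bregman_bounds(1)[OF sc, of u y] \<open>0 \<le> \<mu>\<close>
    by (meson order_trans divide_nonneg_nonneg mult_nonneg_nonneg zero_le_numeral zero_le_power2)
  moreover have "bregman g gr u x \<le> L / 2 * s\<^sup>2 * (norm v)\<^sup>2"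
    using sc_smooth_bregman_bounds(2)[OF sc, of u x] by (simp add: u_def power_mult_distrib)
  ultimately show "s * (norm v)\<^sup>2 - L / 2 * s\<^sup>2 * (norm v)\<^sup>2 \<le> bregman g gr x y"
    using split by linarith
qed simp

lemma sc_smooth_grad_lipschitz:
  assumes sc: "sc_smooth \<mu> L g gr" and "0 \<le> \<mu>"
  shows "(norm (gr x - gr y))\<^sup>2 \<le> L\<^sup>2 * (norm (x - y))\<^sup>2"
proof -
  have "0 \<le> L"
    using sc_smooth_le[OF sc] \<open>0 \<le> \<mu>\<close> by simp
  then have "2 * L * bregman g gr x y \<le> 2 * L * (L / 2 * (norm (x - y))\<^sup>2)"
    using sc_smooth_bregman_bounds(2)[OF sc] by (intro mult_left_mono) auto
  then show ?thesis
    using sc_smooth_cocoercive[OF assms, of x y] by (simp add: power2_eq_square)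
qed

lemma norm_vec_power2:
  fixes v :: "real^'d"
  shows "(norm v)\<^sup>2 = (\<Sum>i\<in>UNIV. (v $ i)\<^sup>2)"
  unfolding power2_norm_eq_inner inner_vec_def by (simp add: power2_eq_square)

lemma wnorm2_diag_inv_le:
  fixes d v :: "real^'d"
  assumes "0 < \<alpha>" "\<And>i. \<alpha> \<le> d $ i"
  shows "wnorm2 (diag_inv d) v \<le> (norm v)\<^sup>2 / \<alpha>"
proof -
  have "wnorm2 (diag_inv d) v = (\<Sum>i\<in>UNIV. (v $ i)\<^sup>2 / d $ i)"
    by (simp add: wnorm2_def diag_inv_def)
  also have "\<dots> \<le> (\<Sum>i\<in>UNIV. (v $ i)\<^sup>2 / \<alpha>)"
    using assms by (intro sum_mono divide_left_mono) (auto intro: mult_pos_pos less_le_trans)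
  also have "\<dots> = (norm v)\<^sup>2 / \<alpha>"
    by (simp add: norm_vec_power2 sum_divide_distrib)
  finally show ?thesis .
qed

lemma wnorm2_ge:
  fixes d v :: "real^'d"
  assumes "\<And>i. \<alpha> \<le> d $ i"
  shows "\<alpha> * (norm v)\<^sup>2 \<le> wnorm2 d v"
proof -
  have "\<alpha> * (norm v)\<^sup>2 = (\<Sum>i\<in>UNIV. \<alpha> * (v $ i)\<^sup>2)"
    by (simp add: norm_vec_power2 sum_distrib_left)
  also have "\<dots> \<le> wnorm2 d v"
    unfolding wnorm2_def using assms by (intro sum_mono mult_right_mono) auto
  finally show ?thesis .
qed

lemma norm_add_sq_le:
  fixes u w :: "'a::real_normed_vector"
  shows "(norm (u + w))\<^sup>2 \<le> 2 * (norm u)\<^sup>2 + 2 * (norm w)\<^sup>2"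
proof -
  have "(norm (u + w))\<^sup>2 \<le> (norm u + norm w)\<^sup>2"
    by (simp add: norm_triangle_ineq power_mono)
  also have "\<dots> \<le> 2 * (norm u)\<^sup>2 + 2 * (norm w)\<^sup>2"
    using zero_le_power2[of "norm u - norm w"] unfolding power2_diff power2_sum by linarith
  finally show ?thesis .
qed

lemma norm_sum_sq_le:
  fixes a :: "'i \<Rightarrow> 'a::real_normed_vector"
  shows "(norm (\<Sum>i\<in>I. a i))\<^sup>2 \<le> card I * (\<Sum>i\<in>I. (norm (a i))\<^sup>2)"
proof -
  have "(norm (\<Sum>i\<in>I. a i))\<^sup>2 \<le> (\<Sum>i\<in>I. norm (a i))\<^sup>2"
    by (simp add: norm_sum power_mono)
  also have "\<dots> \<le> card I * (\<Sum>i\<in>I. (norm (a i))\<^sup>2)"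
    using sum_squared_le_sum_of_squares[of "\<lambda>i. norm (a i)" I] by (simp add: mult.commute)
  finally show ?thesis .
qed

lemma norm_mean_sum3_sq_le:
  fixes a b c :: "'i \<Rightarrow> 'a::real_normed_vector" and I :: "'i set"
  defines "n \<equiv> real (card I)"
  shows "(norm ((1 / n) *\<^sub>R (\<Sum>i\<in>I. a i + b i + c i)))\<^sup>2
    \<le> 2 / n * (\<Sum>i\<in>I. (norm (a i))\<^sup>2) + 4 / n * (\<Sum>i\<in>I. (norm (b i))\<^sup>2)
       + 4 / n\<^sup>2 * (norm (\<Sum>i\<in>I. c i))\<^sup>2"
proof (cases "n = 0")
  case False
  define A B C where "A = (\<Sum>i\<in>I. a i)" and "B = (\<Sum>i\<in>I. b i)" and "C = (\<Sum>i\<in>I. c i)"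
  have "(norm ((1 / n) *\<^sub>R (\<Sum>i\<in>I. a i + b i + c i)))\<^sup>2 = (norm (A + B + C))\<^sup>2 / n\<^sup>2"
    by (simp add: A_def B_def C_def sum.distrib power_mult_distrib power_divide)
  also have "\<dots> \<le> (2 * (norm A)\<^sup>2 + 4 * (norm B)\<^sup>2 + 4 * (norm C)\<^sup>2) / n\<^sup>2"
    using norm_add_sq_le[of A "B + C"] norm_add_sq_le[of B C]
    by (intro divide_right_mono) (simp_all add: add.assoc)
  also have "\<dots> \<le> (2 * (n * (\<Sum>i\<in>I. (norm (a i))\<^sup>2)) + 4 * (n * (\<Sum>i\<in>I. (norm (b i))\<^sup>2))
      + 4 * (norm C)\<^sup>2) / n\<^sup>2"
    using norm_sum_sq_le[of a I] norm_sum_sq_le[of b I]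
    by (intro divide_right_mono) (simp_all add: A_def B_def n_def)
  finally show ?thesis
    using False by (simp add: C_def field_simps power2_eq_square)
qed (simp add: n_def)

lemma
  fixes N :: "'i \<Rightarrow> 'a measure" and h :: "'i \<Rightarrow> 'a \<Rightarrow> real"
  assumes I: "finite I" "J \<subseteq> I" and prob: "\<And>i. i \<in> I \<Longrightarrow> prob_space (N i)"
    and int: "\<And>j. j \<in> J \<Longrightarrow> integrable (N j) (h j)"
  shows integrable_PiM_prod_components: "integrable (PiM I N) (\<lambda>z. \<Prod>j\<in>J. h j (z j))"
    and integral_PiM_prod_components:
      "(\<integral>z. (\<Prod>j\<in>J. h j (z j)) \<partial>PiM I N) = (\<Prod>j\<in>J. integral\<^sup>L (N j) (h j))"
proof -
  text \<open>Pad the family with probability spaces outside I and with the constant 1 outside J,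
    so that the library's product formula over all of I applies.\<close>
  define N' where "N' i = (if i \<in> I then N i else return (count_space UNIV) undefined)" for i
  define h' where "h' j = (\<lambda>x. if j \<in> J then h j x else 1)" for j
  have prob': "prob_space (N' i)" for i
    by (simp add: N'_def prob prob_space_return)
  interpret product_sigma_finite N'
    by (simp add: product_sigma_finite_def prob' prob_space_imp_sigma_finite)
  have Pi_eq: "PiM I N = PiM I N'"
    by (rule PiM_cong) (simp_all add: N'_def)
  have const_int: "integrable (N' j) (\<lambda>_. 1)" for j
  proof -
    interpret prob_space "N' j"
      by (rule prob')
    show ?thesis
      by simp
  qed
  have int': "integrable (N' j) (h' j)" if "j \<in> I" for j
    using int[of j] const_int[of j] that by (cases "j \<in> J") (simp_all add: h'_def N'_def)
  have prod_eq: "(\<Prod>j\<in>I. h' j (z j)) = (\<Prod>j\<in>J. h j (z j))" for z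
    using I by (simp add: h'_def prod.If_cases Int_absorb1)
  have integral_eq: "(\<Prod>j\<in>I. integral\<^sup>L (N' j) (h' j)) = (\<Prod>j\<in>J. integral\<^sup>L (N j) (h j))"
  proof -
    have "(\<Prod>j\<in>I. integral\<^sup>L (N' j) (h' j)) = (\<Prod>j\<in>I. if j \<in> J then integral\<^sup>L (N j) (h j) else 1)"
      using I prob by (intro prod.cong) (auto simp: h'_def N'_def prob_space.prob_space)
    then show ?thesis
      using I by (simp add: prod.If_cases Int_absorb1)
  qed
  show "integrable (PiM I N) (\<lambda>z. \<Prod>j\<in>J. h j (z j))"
    using product_integrable_prod[OF I(1) int'] by (simp add: Pi_eq prod_eq)
  show "(\<integral>z. (\<Prod>j\<in>J. h j (z j)) \<partial>PiM I N) = (\<Prod>j\<in>J. integral\<^sup>L (N j) (h j))"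
    using product_integral_prod[OF I(1) int'] by (simp add: Pi_eq prod_eq integral_eq)
qed

lemma
  fixes N :: "'i \<Rightarrow> 'a measure" and h :: "'a \<Rightarrow> real"
  assumes "finite I" "i \<in> I" "\<And>i. i \<in> I \<Longrightarrow> prob_space (N i)" "integrable (N i) h"
  shows integrable_PiM_component: "integrable (PiM I N) (\<lambda>z. h (z i))"
    and integral_PiM_component: "(\<integral>z. h (z i) \<partial>PiM I N) = integral\<^sup>L (N i) h"
  using integrable_PiM_prod_components[of I "{i}" N "\<lambda>_. h"]
    integral_PiM_prod_components[of I "{i}" N "\<lambda>_. h"] assms by simp_all

lemma
  fixes N :: "'i \<Rightarrow> 'a measure" and h :: "'i \<Rightarrow> 'a \<Rightarrow> real"
  assumes "finite I" "\<And>i. i \<in> I \<Longrightarrow> prob_space (N i)" "\<And>i. i \<in> I \<Longrightarrow> integrable (N i) (h i)"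
  shows integrable_PiM_sum_components: "integrable (PiM I N) (\<lambda>z. \<Sum>i\<in>I. h i (z i))"
    and integral_PiM_sum_components:
      "(\<integral>z. (\<Sum>i\<in>I. h i (z i)) \<partial>PiM I N) = (\<Sum>i\<in>I. integral\<^sup>L (N i) (h i))"
  using assms integrable_PiM_component[of I _ N] integral_PiM_component[of I _ N]
  by (auto intro!: sum.cong)

lemma
  fixes N :: "'i \<Rightarrow> 'a measure" and c :: "'i \<Rightarrow> 'a \<Rightarrow> 'b::euclidean_space"
  assumes "finite I" "i \<in> I" "j \<in> I" "i \<noteq> j" and prob: "\<And>i. i \<in> I \<Longrightarrow> prob_space (N i)"
    and int: "integrable (N i) (c i)" "integrable (N j) (c j)"
  shows integrable_PiM_inner_components: "integrable (PiM I N) (\<lambda>z. c i (z i) \<bullet> c j (z j))"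
    and integral_PiM_inner_components:
      "(\<integral>z. c i (z i) \<bullet> c j (z j) \<partial>PiM I N) = integral\<^sup>L (N i) (c i) \<bullet> integral\<^sup>L (N j) (c j)"
proof -
  define h where "h b k = (if k = i then (\<lambda>w. c i w \<bullet> b) else (\<lambda>w. c j w \<bullet> b))" for b k
  have h_int: "integrable (N k) (h b k)" if "k \<in> {i, j}" for b k
    using that int by (auto simp: h_def)
  have prod_eq: "(\<Prod>k\<in>{i, j}. h b k (z k)) = (c i (z i) \<bullet> b) * (c j (z j) \<bullet> b)" for b z
    using \<open>i \<noteq> j\<close> by (simp add: h_def)
  have integral_eq: "(\<Prod>k\<in>{i, j}. integral\<^sup>L (N k) (h b k))
      = (integral\<^sup>L (N i) (c i) \<bullet> b) * (integral\<^sup>L (N j) (c j) \<bullet> b)" for b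
    using \<open>i \<noteq> j\<close> int by (simp add: h_def)
  have coord: "integrable (PiM I N) (\<lambda>z. (c i (z i) \<bullet> b) * (c j (z j) \<bullet> b))"
      "(\<integral>z. (c i (z i) \<bullet> b) * (c j (z j) \<bullet> b) \<partial>PiM I N)
         = (integral\<^sup>L (N i) (c i) \<bullet> b) * (integral\<^sup>L (N j) (c j) \<bullet> b)" for b
    using integrable_PiM_prod_components[of I "{i, j}" N "h b", OF _ _ prob h_int]
      integral_PiM_prod_components[of I "{i, j}" N "h b", OF _ _ prob h_int] assms
    by (simp_all add: prod_eq integral_eq)
  show "integrable (PiM I N) (\<lambda>z. c i (z i) \<bullet> c j (z j))"
    using coord(1) by (subst euclidean_inner) auto
  show "(\<integral>z. c i (z i) \<bullet> c j (z j) \<partial>PiM I N) = integral\<^sup>L (N i) (c i) \<bullet> integral\<^sup>L (N j) (c j)"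
    using coord by (subst (1 2) euclidean_inner) (simp add: integral_sum)
qed

lemma (in finite_measure) norm_square_integrable_imp_integrable:
  fixes f :: "'a \<Rightarrow> 'b::{banach, second_countable_topology}"
  assumes "f \<in> borel_measurable M" "integrable M (\<lambda>x. (norm (f x))\<^sup>2)"
  shows "integrable M f"
  using square_integrable_imp_integrable[of "\<lambda>x. norm (f x)"] assms
  by (simp add: integrable_norm_iff)

lemma
  fixes N :: "'i \<Rightarrow> 'a measure" and c :: "'i \<Rightarrow> 'a \<Rightarrow> 'b::euclidean_space"
  assumes I: "finite I" and prob: "\<And>i. i \<in> I \<Longrightarrow> prob_space (N i)"
    and meas: "\<And>i. i \<in> I \<Longrightarrow> c i \<in> borel_measurable (N i)"
    and sq_int: "\<And>i. i \<in> I \<Longrightarrow> integrable (N i) (\<lambda>w. (norm (c i w))\<^sup>2)"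
  shows integrable_PiM_norm_sum_components_sq:
      "integrable (PiM I N) (\<lambda>z. (norm (\<Sum>i\<in>I. c i (z i)))\<^sup>2)"
    and integral_PiM_norm_sum_components_sq:
      "(\<integral>z. (norm (\<Sum>i\<in>I. c i (z i)))\<^sup>2 \<partial>PiM I N)
         = (norm (\<Sum>i\<in>I. integral\<^sup>L (N i) (c i)))\<^sup>2
           + (\<Sum>i\<in>I. (\<integral>w. (norm (c i w))\<^sup>2 \<partial>N i) - (norm (integral\<^sup>L (N i) (c i)))\<^sup>2)"
proof -
  define m where "m i = integral\<^sup>L (N i) (c i)" for i
  define Q where "Q i j = (if i = j then \<integral>w. (norm (c i w))\<^sup>2 \<partial>N i else m i \<bullet> m j)" for i j
  have c_int: "integrable (N i) (c i)" if "i \<in> I" for i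
    using prob_space.finite_measure[OF prob] finite_measure.norm_square_integrable_imp_integrable
      meas sq_int that by blast
  have pair: "integrable (PiM I N) (\<lambda>z. c i (z i) \<bullet> c j (z j))
      \<and> (\<integral>z. c i (z i) \<bullet> c j (z j) \<partial>PiM I N) = Q i j" if "i \<in> I" "j \<in> I" for i j
  proof (cases "i = j")
    case True
    then show ?thesis
      using integrable_PiM_component[of I i N, OF I that(1) prob sq_int]
        integral_PiM_component[of I i N, OF I that(1) prob sq_int] that
      by (simp add: Q_def power2_norm_eq_inner)
  next
    case False
    then show ?thesis
      using integrable_PiM_inner_components[of I i j N c, OF I that False prob c_int c_int]
        integral_PiM_inner_components[of I i j N c, OF I that False prob c_int c_int] that
      by (simp add: Q_def m_def)
  qed
  have expand: "(norm (\<Sum>i\<in>I. c i (z i)))\<^sup>2 = (\<Sum>i\<in>I. \<Sum>j\<in>I. c i (z i) \<bullet> c j (z j))" for z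
    unfolding power2_norm_eq_inner inner_sum_left inner_sum_right by (rule sum.swap)
  show "integrable (PiM I N) (\<lambda>z. (norm (\<Sum>i\<in>I. c i (z i)))\<^sup>2)"
    unfolding expand using pair by (intro Bochner_Integration.integrable_sum) auto
  have "(\<integral>z. (norm (\<Sum>i\<in>I. c i (z i)))\<^sup>2 \<partial>PiM I N) = (\<Sum>i\<in>I. \<Sum>j\<in>I. Q i j)"
    unfolding expand using pair
    by (simp add: Bochner_Integration.integrable_sum Bochner_Integration.integral_sum)
  also have "\<dots> = (\<Sum>i\<in>I. \<Sum>j\<in>I. m i \<bullet> m j + (if i = j then Q i i - m i \<bullet> m i else 0))"
    by (intro sum.cong) (auto simp: Q_def)
  also have "\<dots> = (norm (\<Sum>i\<in>I. m i))\<^sup>2 + (\<Sum>i\<in>I. Q i i - (norm (m i))\<^sup>2)"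
    using I by (simp add: sum.distrib power2_norm_eq_inner inner_sum_left inner_sum_right)
      (rule sum.swap)
  finally show "(\<integral>z. (norm (\<Sum>i\<in>I. c i (z i)))\<^sup>2 \<partial>PiM I N)
      = (norm (\<Sum>i\<in>I. integral\<^sup>L (N i) (c i)))\<^sup>2
        + (\<Sum>i\<in>I. (\<integral>w. (norm (c i w))\<^sup>2 \<partial>N i) - (norm (integral\<^sup>L (N i) (c i)))\<^sup>2)"
    by (simp add: m_def Q_def)
qed

locale sc_smooth_stochastic = prob_space N
  for N :: "'z measure" and \<mu> L :: real and f :: "real^'d \<Rightarrow> 'z \<Rightarrow> real"
    and G :: "real^'d \<Rightarrow> 'z \<Rightarrow> real^'d" and gf :: "real^'d \<Rightarrow> real^'d" +
  assumes mu_nonneg: "0 \<le> \<mu>"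
    and integrable_f: "\<And>x. integrable N (f x)"
    and G_measurable [measurable]: "\<And>x. G x \<in> borel_measurable N"
    and sc_smooth_samples: "AE z in N. sc_smooth \<mu> L (\<lambda>x. f x z) (\<lambda>x. G x z)"
    and sc_smooth_mean: "sc_smooth \<mu> L (\<lambda>x. \<integral>z. f x z \<partial>N) gf"
begin

lemma
  shows integrable_grad_diff_sq: "integrable N (\<lambda>z. (norm (G x z - G y z))\<^sup>2)"
    and integral_grad_diff_sq_le: "(\<integral>z. (norm (G x z - G y z))\<^sup>2 \<partial>N) \<le> L\<^sup>2 * (norm (x - y))\<^sup>2"
proof -
  have bound: "AE z in N. (norm (G x z - G y z))\<^sup>2 \<le> L\<^sup>2 * (norm (x - y))\<^sup>2"
    using sc_smooth_samples by eventually_elim (rule sc_smooth_grad_lipschitz[OF _ mu_nonneg])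
  show int: "integrable N (\<lambda>z. (norm (G x z - G y z))\<^sup>2)"
    by (rule Bochner_Integration.integrable_bound[of _ "\<lambda>_. L\<^sup>2 * (norm (x - y))\<^sup>2"])
      (use bound in auto)
  show "(\<integral>z. (norm (G x z - G y z))\<^sup>2 \<partial>N) \<le> L\<^sup>2 * (norm (x - y))\<^sup>2"
    using integral_mono_AE[OF int _ bound] by (simp add: prob_space)
qed

lemma integral_grad:
  assumes G_int: "integrable N (G x)"
  shows "integral\<^sup>L N (G x) = gf x"
proof -
  let ?F = "\<lambda>x. \<integral>z. f x z \<partial>N"
  have "(gf x - integral\<^sup>L N (G x)) \<bullet> h \<le> L / 2 * (norm h)\<^sup>2" for h
  proof -
    let ?B = "\<lambda>z. bregman (\<lambda>x. f x z) (\<lambda>x. G x z) (x + h) x"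
    have ae: "AE z in N. ?B z \<le> L / 2 * (norm h)\<^sup>2"
      using sc_smooth_samples
      by eventually_elim (use sc_smooth_bregman_bounds(2)[where x="x + h" and y=x] in simp)
    have int: "integrable N ?B"
      using integrable_f G_int by (simp add: bregman_def)
    have "?F (x + h) - ?F x - integral\<^sup>L N (G x) \<bullet> h = integral\<^sup>L N ?B"
      using integrable_f G_int by (simp add: bregman_def)
    also have "\<dots> \<le> L / 2 * (norm h)\<^sup>2"
      using integral_mono_AE[OF int _ ae] by (simp add: prob_space)
    finally have upper: "?F (x + h) - ?F x - integral\<^sup>L N (G x) \<bullet> h \<le> L / 2 * (norm h)\<^sup>2" .
    have "0 \<le> \<mu> / 2 * (norm h)\<^sup>2"
      using mu_nonneg by simp
    also have "\<dots> \<le> ?F (x + h) - ?F x - gf x \<bullet> h"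
      using sc_smooth_bregman_bounds(1)[OF sc_smooth_mean, of "x + h" x] by (simp add: bregman_def)
    finally show ?thesis
      using upper by (simp add: inner_diff_left)
  qed
  then show ?thesis
    using inner_le_quadratic_imp_eq_0 by fastforce
qed

lemma integral_grad_diff_sq_le_bregman:
  assumes G_int: "integrable N (G y)"
  shows "(\<integral>z. (norm (G x z - G y z))\<^sup>2 \<partial>N) \<le> 2 * L * bregman (\<lambda>x. \<integral>z. f x z \<partial>N) gf x y"
proof -
  have "AE z in N. (norm (G x z - G y z))\<^sup>2 \<le> 2 * L * bregman (\<lambda>x. f x z) (\<lambda>x. G x z) x y"
    using sc_smooth_samples by eventually_elim (rule sc_smooth_cocoercive[OF _ mu_nonneg])
  then have "(\<integral>z. (norm (G x z - G y z))\<^sup>2 \<partial>N)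
      \<le> (\<integral>z. 2 * L * bregman (\<lambda>x. f x z) (\<lambda>x. G x z) x y \<partial>N)"
    using integrable_grad_diff_sq integrable_f G_int by (intro integral_mono_AE) (auto simp: bregman_def)
  also have "\<dots> = 2 * L * bregman (\<lambda>x. \<integral>z. f x z \<partial>N) gf x y"
    using integrable_f G_int by (simp add: bregman_def integral_grad)
  finally show ?thesis .
qed

end

lemma bregman_fobj:
  "bregman (fobj M D f) (\<lambda>x. (1 / real M) *\<^sub>R (\<Sum>m<M. gf m x)) x y
     = (1 / real M) * (\<Sum>m<M. bregman (\<lambda>x. \<integral>z. f m x z \<partial>D m) (gf m) x y)"
  by (simp add: bregman_def fobj_def sum_subtractf inner_sum_left right_diff_distrib)

locale federated_objective =
  fixes M :: nat and \<mu> L :: real and D :: "nat \<Rightarrow> 'z measure"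
    and f :: "nat \<Rightarrow> real^'d \<Rightarrow> 'z \<Rightarrow> real" and G :: "nat \<Rightarrow> real^'d \<Rightarrow> 'z \<Rightarrow> real^'d"
    and gf :: "nat \<Rightarrow> real^'d \<Rightarrow> real^'d" and xstar :: "real^'d"
  assumes clients: "\<And>m. m < M \<Longrightarrow> sc_smooth_stochastic (D m) \<mu> L (f m) (G m) (gf m)"
    and G_xstar_sq_integrable: "\<And>m. m < M \<Longrightarrow> integrable (D m) (\<lambda>z. (norm (G m xstar z))\<^sup>2)"
    and xstar_min: "\<And>x. fobj M D f xstar \<le> fobj M D f x"
begin

lemma prob_clients: "m < M \<Longrightarrow> prob_space (D m)"
  using clients sc_smooth_stochastic_def by blast

lemma integrable_G_xstar: "m < M \<Longrightarrow> integrable (D m) (G m xstar)"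
  using clients[THEN sc_smooth_stochastic.axioms(1), THEN prob_space.finite_measure]
    finite_measure.norm_square_integrable_imp_integrable
    clients[THEN sc_smooth_stochastic.G_measurable] G_xstar_sq_integrable by blast

lemma sum_grad_xstar_eq_0: "(\<Sum>m<M. gf m xstar) = 0"
proof (cases "M = 0")
  case False
  have "bregman (fobj M D f) (\<lambda>x. (1 / real M) *\<^sub>R (\<Sum>m<M. gf m x)) (xstar + h) xstar
      \<le> L / 2 * (norm h)\<^sup>2" for h
  proof -
    have "(\<Sum>m<M. bregman (\<lambda>x. \<integral>z. f m x z \<partial>D m) (gf m) (xstar + h) xstar)
        \<le> (\<Sum>m<M. L / 2 * (norm h)\<^sup>2)"
      using sc_smooth_bregman_bounds(2)[OF clients[THEN sc_smooth_stochastic.sc_smooth_mean],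
          where x="xstar + h" and y=xstar]
      by (intro sum_mono) simp
    then show ?thesis
      using False by (simp add: bregman_fobj field_simps)
  qed
  then have "(1 / real M) *\<^sub>R (\<Sum>m<M. gf m xstar) = 0"
    by (intro grad_eq_0_if_min_upper_quadratic[where g="fobj M D f" and c="L / 2", OF _ xstar_min])
      (simp add: bregman_def)
  with False show ?thesis
    by simp
qed simp

lemma
  shows integrable_norm_sum_G_xstar_sq:
      "integrable (PiM {..<M} D) (\<lambda>z. (norm (\<Sum>m<M. G m xstar (z m)))\<^sup>2)"
    and integral_norm_sum_G_xstar_sq_le:
      "(\<integral>z. (norm (\<Sum>m<M. G m xstar (z m)))\<^sup>2 \<partial>PiM {..<M} D)
         \<le> (\<Sum>m<M. \<integral>z. (norm (G m xstar z))\<^sup>2 \<partial>D m)"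
proof -
  note indep = integrable_PiM_norm_sum_components_sq integral_PiM_norm_sum_components_sq
  note hyps = finite_lessThan prob_clients clients[THEN sc_smooth_stochastic.G_measurable]
    G_xstar_sq_integrable
  show "integrable (PiM {..<M} D) (\<lambda>z. (norm (\<Sum>m<M. G m xstar (z m)))\<^sup>2)"
    using indep(1)[of "{..<M}" D "\<lambda>m. G m xstar"] hyps by simp
  have "(\<Sum>m<M. integral\<^sup>L (D m) (G m xstar)) = 0"
    using sum_grad_xstar_eq_0 clients[THEN sc_smooth_stochastic.integral_grad, OF _ integrable_G_xstar]
    by simp
  then show "(\<integral>z. (norm (\<Sum>m<M. G m xstar (z m)))\<^sup>2 \<partial>PiM {..<M} D)
      \<le> (\<Sum>m<M. \<integral>z. (norm (G m xstar z))\<^sup>2 \<partial>D m)"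
    using indep(2)[of "{..<M}" D "\<lambda>m. G m xstar"] hyps by (simp add: sum_subtractf sum_nonneg)
qed

lemma
  fixes X :: "nat \<Rightarrow> real^'d" and y :: "real^'d"
  defines "P \<equiv> \<lambda>z. 2 / real M * (\<Sum>m<M. (norm (G m (X m) (z m) - G m y (z m)))\<^sup>2)
      + 4 / real M * (\<Sum>m<M. (norm (G m y (z m) - G m xstar (z m)))\<^sup>2)
      + 4 / (real M)\<^sup>2 * (norm (\<Sum>m<M. G m xstar (z m)))\<^sup>2"
  shows integrable_split_second_moment: "integrable (PiM {..<M} D) P"
    and integral_split_second_moment_le: "integral\<^sup>L (PiM {..<M} D) P
      \<le> 2 / real M * L\<^sup>2 * (\<Sum>m<M. (norm (X m - y))\<^sup>2)
        + 8 * L * bregman (fobj M D f) (\<lambda>x. (1 / real M) *\<^sub>R (\<Sum>m<M. gf m x)) y xstar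
        + 4 / (real M)\<^sup>2 * (\<Sum>m<M. \<integral>z. (norm (G m xstar z))\<^sup>2 \<partial>D m)"
proof -
  let ?a = "\<lambda>m w. (norm (G m (X m) w - G m y w))\<^sup>2"
  let ?b = "\<lambda>m w. (norm (G m y w - G m xstar w))\<^sup>2"
  note client = clients[THEN sc_smooth_stochastic.integrable_grad_diff_sq]
  note sums = integrable_PiM_sum_components[OF finite_lessThan prob_clients]
    integral_PiM_sum_components[OF finite_lessThan prob_clients]
  have int_a: "integrable (PiM {..<M} D) (\<lambda>z. \<Sum>m<M. ?a m (z m))"
    and int_b: "integrable (PiM {..<M} D) (\<lambda>z. \<Sum>m<M. ?b m (z m))"
    and integral_a: "(\<integral>z. (\<Sum>m<M. ?a m (z m)) \<partial>PiM {..<M} D) = (\<Sum>m<M. integral\<^sup>L (D m) (?a m))"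
    and integral_b: "(\<integral>z. (\<Sum>m<M. ?b m (z m)) \<partial>PiM {..<M} D) = (\<Sum>m<M. integral\<^sup>L (D m) (?b m))"
    using sums[where h = ?a] sums[where h = ?b] client by simp_all
  show "integrable (PiM {..<M} D) P"
    unfolding P_def using int_a int_b integrable_norm_sum_G_xstar_sq by simp
  have "(\<Sum>m<M. integral\<^sup>L (D m) (?a m)) \<le> (\<Sum>m<M. L\<^sup>2 * (norm (X m - y))\<^sup>2)"
    by (intro sum_mono) (simp add: clients[THEN sc_smooth_stochastic.integral_grad_diff_sq_le])
  moreover have "(\<Sum>m<M. integral\<^sup>L (D m) (?b m))
      \<le> (\<Sum>m<M. 2 * L * bregman (\<lambda>x. \<integral>z. f m x z \<partial>D m) (gf m) y xstar)"
    by (intro sum_mono) (simp add: clients[THEN sc_smooth_stochastic.integral_grad_diff_sq_le_bregman]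
        integrable_G_xstar)
  moreover note integral_norm_sum_G_xstar_sq_le
  ultimately show "integral\<^sup>L (PiM {..<M} D) P
      \<le> 2 / real M * L\<^sup>2 * (\<Sum>m<M. (norm (X m - y))\<^sup>2)
        + 8 * L * bregman (fobj M D f) (\<lambda>x. (1 / real M) *\<^sub>R (\<Sum>m<M. gf m x)) y xstar
        + 4 / (real M)\<^sup>2 * (\<Sum>m<M. \<integral>z. (norm (G m xstar z))\<^sup>2 \<partial>D m)"
    unfolding P_def using int_a int_b integrable_norm_sum_G_xstar_sq
    by (simp add: integral_a integral_b bregman_fobj sum_distrib_left[symmetric])
      (intro add_mono divide_right_mono; simp)
qed

theorem preconditioned_mean_grad_second_moment_le:
  fixes X :: "nat \<Rightarrow> real^'d" and y d :: "real^'d"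
  assumes \<alpha>: "0 < \<alpha>" and d: "\<And>i. \<alpha> \<le> d $ i"
  shows "(\<integral>z. wnorm2 (diag_inv d) ((1 / real M) *\<^sub>R (\<Sum>m<M. G m (X m) (z m))) \<partial>PiM {..<M} D)
    \<le> 2 * L\<^sup>2 / \<alpha>\<^sup>2 * ((1 / real M) * (\<Sum>m<M. wnorm2 d (X m - y)))
      + 8 * L / \<alpha> * bregman (fobj M D f) (\<lambda>x. (1 / real M) *\<^sub>R (\<Sum>m<M. gf m x)) y xstar
      + 4 * ((1 / real M) * (\<Sum>m<M. \<integral>z. (norm (G m xstar z))\<^sup>2 \<partial>D m)) / (real M * \<alpha>)"
proof -
  define P where "P = (\<lambda>z. 2 / real M * (\<Sum>m<M. (norm (G m (X m) (z m) - G m y (z m)))\<^sup>2)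
      + 4 / real M * (\<Sum>m<M. (norm (G m y (z m) - G m xstar (z m)))\<^sup>2)
      + 4 / (real M)\<^sup>2 * (norm (\<Sum>m<M. G m xstar (z m)))\<^sup>2)"
  have P_nonneg: "0 \<le> P z" for z
    by (simp add: P_def sum_nonneg)
  have "wnorm2 (diag_inv d) ((1 / real M) *\<^sub>R (\<Sum>m<M. G m (X m) (z m)))
      \<le> (norm ((1 / real M) *\<^sub>R (\<Sum>m<M. G m (X m) (z m))))\<^sup>2 / \<alpha>" for z
    by (rule wnorm2_diag_inv_le[OF \<alpha> d])
  also have "\<dots> z \<le> P z / \<alpha>" for z
    using norm_mean_sum3_sq_le[where I="{..<M}" and a="\<lambda>m. G m (X m) (z m) - G m y (z m)"
        and b="\<lambda>m. G m y (z m) - G m xstar (z m)" and c="\<lambda>m. G m xstar (z m)"] \<alpha>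
    unfolding P_def by (intro divide_right_mono) simp_all
  finally have pointwise:
      "wnorm2 (diag_inv d) ((1 / real M) *\<^sub>R (\<Sum>m<M. G m (X m) (z m))) \<le> P z / \<alpha>" for z .
  have "(\<integral>z. wnorm2 (diag_inv d) ((1 / real M) *\<^sub>R (\<Sum>m<M. G m (X m) (z m))) \<partial>PiM {..<M} D)
      \<le> (\<integral>z. P z / \<alpha> \<partial>PiM {..<M} D)"
    using pointwise P_nonneg integrable_split_second_moment[of X y, folded P_def] \<alpha>
    by (intro integral_mono') auto
  also have "\<dots> \<le> (2 / real M * L\<^sup>2 * (\<Sum>m<M. (norm (X m - y))\<^sup>2)
        + 8 * L * bregman (fobj M D f) (\<lambda>x. (1 / real M) *\<^sub>R (\<Sum>m<M. gf m x)) y xstar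
        + 4 / (real M)\<^sup>2 * (\<Sum>m<M. \<integral>z. (norm (G m xstar z))\<^sup>2 \<partial>D m)) / \<alpha>"
    using integral_split_second_moment_le[of X y, folded P_def] \<alpha>
    by (simp add: divide_right_mono)
  also have "\<dots> \<le> (2 / real M * L\<^sup>2 * ((\<Sum>m<M. wnorm2 d (X m - y)) / \<alpha>)
        + 8 * L * bregman (fobj M D f) (\<lambda>x. (1 / real M) *\<^sub>R (\<Sum>m<M. gf m x)) y xstar
        + 4 / (real M)\<^sup>2 * (\<Sum>m<M. \<integral>z. (norm (G m xstar z))\<^sup>2 \<partial>D m)) / \<alpha>"
    using wnorm2_ge[OF d] \<alpha>
    by (intro divide_right_mono add_mono mult_left_mono order.refl)
      (auto simp: sum_divide_distrib field_simps intro!: sum_mono)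
  finally show ?thesis
    using \<alpha> by (cases "M = 0") (simp_all add: field_simps power2_eq_square)
qed

end

theorem lemma5:
  fixes M :: nat and \<mu> L \<alpha> \<Gamma> \<gamma> :: real
    and D :: "nat \<Rightarrow> 'z measure"
    and f :: "nat \<Rightarrow> real^'d \<Rightarrow> 'z \<Rightarrow> real"
    and G :: "nat \<Rightarrow> real^'d \<Rightarrow> 'z \<Rightarrow> real^'d"
    and gf :: "nat \<Rightarrow> real^'d \<Rightarrow> real^'d"
    and xstar x0 D0 :: "real^'d"
    and H :: "(nat \<Rightarrow> nat \<Rightarrow> 'z) \<Rightarrow> nat \<Rightarrow> real^'d"
    and \<beta> :: "nat \<Rightarrow> real" and sq :: bool and S :: "nat set"
    and \<omega> :: "nat \<Rightarrow> nat \<Rightarrow> 'z" and t :: nat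
  assumes M2: "M \<ge> 2"
    and mu: "0 \<le> \<mu>"
    and gamma: "\<gamma> > 0"
    and prob: "\<forall>m<M. prob_space (D m)"
    and f_int: "\<forall>m<M. \<forall>x. integrable (D m) (f m x)"
    and G_meas: "\<forall>m<M. \<forall>x. G m x \<in> borel_measurable (D m)"
    and G_sq_int: "\<forall>m<M. integrable (D m) (\<lambda>z. (norm (G m xstar z))^2)"
    and fm_sc: "\<forall>m<M. sc_smooth \<mu> L (\<lambda>x. \<integral>z. f m x z \<partial>D m) (gf m)"
    and fmz_sc: "\<forall>m<M. AE z in D m. sc_smooth \<mu> L (\<lambda>x. f m x z) (\<lambda>x. G m x z)"
    and xstar_min: "\<forall>x. fobj M D f xstar \<le> fobj M D f x"
    and alpha: "0 < \<alpha>" "\<alpha> \<le> \<Gamma>"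
    and D0_bd: "\<forall>i. \<alpha> \<le> D0$i \<and> D0$i \<le> \<Gamma>"
    and H_bd: "\<forall>\<omega>' s i. \<alpha> \<le> H \<omega>' s $ i \<and> H \<omega>' s $ i \<le> \<Gamma>"
    and beta: "\<forall>s. 0 \<le> \<beta> s \<and> \<beta> s \<le> 1"
    and S0: "0 \<in> S"
    and omega: "\<forall>s m. m < M \<longrightarrow> \<omega> s m \<in> space (D m)"
  shows
    "(let Dh = savic_Dhat \<alpha> sq \<beta> D0 (H \<omega>) S;
          X = savic_iter M \<gamma> S Dh G x0 \<omega> t;
          xhat = (1 / real M) *\<^sub>R (\<Sum>m<M. X m);
          V = (1 / real M) * (\<Sum>m<M. wnorm2 (Dh t) (X m - xhat));
          gradf = (1 / real M) *\<^sub>R (\<Sum>m<M. gf m xstar);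
          Bf = fobj M D f xhat - fobj M D f xstar - gradf \<bullet> (xhat - xstar);
          sigma2 = (1 / real M) * (\<Sum>m<M. \<integral>z. (norm (G m xstar z))^2 \<partial>D m)
      in (\<integral>z. wnorm2 (diag_inv (Dh t)) ((1 / real M) *\<^sub>R (\<Sum>m<M. G m (X m) (z m)))
              \<partial>(PiM {..<M} D))
         \<le> 2 * L^2 / \<alpha>^2 * V + 8 * L / \<alpha> * Bf + 4 * sigma2 / (real M * \<alpha>))"
proof -
  interpret federated_objective M \<mu> L D f G gf xstar
  proof (rule federated_objective.intro)
    show "sc_smooth_stochastic (D m) \<mu> L (f m) (G m) (gf m)" if "m < M" for m
      using that prob f_int G_meas fm_sc fmz_sc mu
      by (simp add: sc_smooth_stochastic_def sc_smooth_stochastic_axioms_def)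
  qed (use G_sq_int xstar_min in auto)
  have "\<alpha> \<le> savic_Dhat \<alpha> sq \<beta> D0 (H \<omega>) S t $ i" for i
    by (simp add: savic_Dhat_def hatD_def)
  from preconditioned_mean_grad_second_moment_le[OF alpha(1) this]
  show ?thesis
    unfolding Let_def bregman_def .
qed

end
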